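(* Let $(\alpha,\beta)\in\Delta_K$ and let $\varepsilon_n=\varepsilon(T^n(\alpha,\beta))$, $n\ge0$. Suppose that the sequence $\{\varepsilon_n\}_{n\ge0}$ is purely periodic with period length $l$. Then the matrix $M_{\varepsilon_0}M_{\varepsilon_1}\cdots M_{\varepsilon_{l-1}}$ is primitive, i.e. some positive power of it has all entries strictly positive.
   Context: Let $K\subset\mathbb{R}$ be a real cubic number field, $N=N_{K/\mathbb{Q}}$ its norm. Fix $r=p/q$ with $p,q$ positive coprime integers and $3\nmid p$. Let $\Delta_K=\{(\alpha,\beta)\in K^2:\ 1,\alpha,\beta \text{ linearly independent over }\mathbb{Q},\ \alpha,\beta>0,\ \alpha+\beta<1\}$ and $Ind=\{(i,j): i,j\in\{0,1,2\},\ i\neq j\}$. Let $\Delta=\{(x,y)\in\mathbb{R}^2: x,y\ge 0,\ x+y\le 1\}$ and $\triangle(1,2)=\{(x,y)\in\Delta: x\ge y\}$, $\triangle(2,1)=\{x\le y\}$, $\triangle(0,1)=\{2x+y-1\le 0\}$, $\triangle(1,0)=\{2x+y-1\ge 0\}$, $\triangle(0,2)=\{x+2y-1\le0\}$, $\triangle(2,0)=\{x+2y-1\ge 0\}$ (all subsets of $\Delta$). Maps $T_{(i,j)}:\triangle(i,j)\to\Delta$: $T_{(1,2)}(x,y)=(\frac{x-y}{1-y},\frac{y}{1-y})$, $T_{(2,1)}(x,y)=(\frac{x}{1-x},\frac{y-x}{1-x})$, $T_{(0,1)}(x,y)=(\frac{x}{1-x},\frac{y}{1-x})$, $T_{(1,0)}(x,y)=(\frac{2x+y-1}{x+y},\frac{y}{x+y})$,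 $T_{(0,2)}(x,y)=(\frac{x}{1-y},\frac{y}{1-y})$, $T_{(2,0)}(x,y)=(\frac{x}{x+y},\frac{x+2y-1}{x+y})$. For $(\alpha,\beta)\in\Delta_K$ put $\gamma=1-\alpha-\beta$ and $v_{\{1,2\}}=\frac{\alpha^r\beta^r}{|N(\alpha)N(\beta)|}$, $v_{\{0,1\}}=\frac{\alpha^r\gamma^r}{|N(\alpha)N(\gamma)|}$, $v_{\{0,2\}}=\frac{\beta^r\gamma^r}{|N(\beta)N(\gamma)|}$; the maximum is attained at a unique pair $\{i_0,j_0\}$. $\varepsilon(\alpha,\beta)$ is the ordered pair $(i,j)\in Ind$ with $\{i,j\}=\{i_0,j_0\}$ and $(\alpha,\beta)\in\triangle(i,j)$, and $T(\alpha,\beta)=T_{\varepsilon(\alpha,\beta)}(\alpha,\beta)$ (a map $\Delta_K\to\Delta_K$). For $(i,j)\in Ind$, $M_{(i,j)}=(m_{k\ell})_{0\le k,\ell\le2}$ with $m_{k\ell}=1$ if $k=\ell$ or $(k,\ell)=(i,j)$, and $0$ otherwise. *)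

theory Defs
  imports "HOL-Analysis.Analysis"
begin

definition subfield_real :: "real set \<Rightarrow> bool" where
  "subfield_real K \<longleftrightarrow> 0 \<in> K \<and> 1 \<in> K \<and>
     (\<forall>x\<in>K. \<forall>y\<in>K. x + y \<in> K \<and> x * y \<in> K) \<and>
     (\<forall>x\<in>K. - x \<in> K \<and> inverse x \<in> K)"

definition rat_lin_indep :: "(nat \<Rightarrow> real) \<Rightarrow> nat \<Rightarrow> bool" where
  "rat_lin_indep b n \<longleftrightarrow>
     (\<forall>c :: nat \<Rightarrow> rat. (\<Sum>i<n. of_rat (c i) * b i) = 0 \<longrightarrow> (\<forall>i<n. c i = 0))"

definition rat_span :: "(nat \<Rightarrow> real) \<Rightarrow> nat \<Rightarrow> real set" where
  "rat_span b n = {x. \<exists>c :: nat \<Rightarrow> rat. x = (\<Sum>i<n. of_rat (c i) * b i)}"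

definition real_cubic_field :: "real set \<Rightarrow> bool" where
  "real_cubic_field K \<longleftrightarrow> subfield_real K \<and>
     (\<exists>b. (\<forall>i<3. b i \<in> K) \<and> rat_lin_indep b 3 \<and> K = rat_span b 3)"

definition embeddings :: "real set \<Rightarrow> (real \<Rightarrow> complex) set" where
  "embeddings K = {\<sigma>. \<sigma> 1 = 1 \<and>
     (\<forall>x\<in>K. \<forall>y\<in>K. \<sigma> (x + y) = \<sigma> x + \<sigma> y \<and> \<sigma> (x * y) = \<sigma> x * \<sigma> y) \<and>
     (\<forall>x. x \<notin> K \<longrightarrow> \<sigma> x = 0)}"

definition field_norm :: "real set \<Rightarrow> real \<Rightarrow> complex" where
  "field_norm K x = (\<Prod>\<sigma>\<in>embeddings K. \<sigma> x)"

definition Delta_K :: "real set \<Rightarrow> (real \<times> real) set" where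
  "Delta_K K = {(a, b). a \<in> K \<and> b \<in> K \<and> rat_lin_indep (\<lambda>i. [1, a, b] ! i) 3 \<and>
                 a > 0 \<and> b > 0 \<and> a + b < 1}"

definition T_ind :: "nat \<times> nat \<Rightarrow> real \<times> real \<Rightarrow> real \<times> real" where
  "T_ind e z = (case z of (x, y) \<Rightarrow>
     if e = (1,2) then ((x - y) / (1 - y), y / (1 - y))
     else if e = (2,1) then (x / (1 - x), (y - x) / (1 - x))
     else if e = (0,1) then (x / (1 - x), y / (1 - x))
     else if e = (1,0) then ((2*x + y - 1) / (x + y), y / (x + y))
     else if e = (0,2) then (x / (1 - y), y / (1 - y))
     else (x / (x + y), (x + 2*y - 1) / (x + y)))"

text \<open>The index map epsilon; r = p/q. The maximum of the v's is unique on Delta_K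
  (claimed in the paper), so the tie-breaking order below is immaterial there.\<close>
definition eps :: "real set \<Rightarrow> nat \<Rightarrow> nat \<Rightarrow> real \<times> real \<Rightarrow> nat \<times> nat" where
  "eps K p q z = (case z of (x, y) \<Rightarrow>
     let r = real p / real q; g = 1 - x - y;
         N = (\<lambda>t. cmod (field_norm K t));
         v12 = x powr r * y powr r / (N x * N y);
         v01 = x powr r * g powr r / (N x * N g);
         v02 = y powr r * g powr r / (N y * N g)
     in if v01 \<le> v12 \<and> v02 \<le> v12 then (if y \<le> x then (1,2) else (2,1))
        else if v02 \<le> v01 then (if 2*x + y - 1 \<le> 0 then (0,1) else (1,0))
        else (if x + 2*y - 1 \<le> 0 then (0,2) else (2,0)))"

definition Tmap :: "real set \<Rightarrow> nat \<Rightarrow> nat \<Rightarrow> real \<times> real \<Rightarrow> real \<times> real" where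
  "Tmap K p q z = T_ind (eps K p q z) z"

type_synonym mat3 = "nat \<Rightarrow> nat \<Rightarrow> nat"

definition M_ind :: "nat \<times> nat \<Rightarrow> mat3" where
  "M_ind e k l = (if k = l \<or> (k, l) = e then 1 else 0)"

definition mat_mult3 :: "mat3 \<Rightarrow> mat3 \<Rightarrow> mat3" where
  "mat_mult3 A B i j = (\<Sum>k<3. A i k * B k j)"

definition mat_id3 :: mat3 where
  "mat_id3 i j = (if i = j then 1 else 0)"

definition mat_prod_list3 :: "mat3 list \<Rightarrow> mat3" where
  "mat_prod_list3 As = foldr mat_mult3 As mat_id3"

definition mat_pow3 :: "mat3 \<Rightarrow> nat \<Rightarrow> mat3" where
  "mat_pow3 A k = mat_prod_list3 (replicate k A)"

definition primitive3 :: "mat3 \<Rightarrow> bool" where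
  "primitive3 A \<longleftrightarrow> (\<exists>k>0. \<forall>i<3. \<forall>j<3. mat_pow3 A k i j > 0)"

end

theory Submission
  imports Defs
begin

text \<open>
  Write \<open>(\<alpha>, \<beta>)\<close> projectively as the positive weight vector \<open>w = (1 - \<alpha> - \<beta>, \<alpha>, \<beta>)\<close>
  on the vertices 0, 1, 2. A step of \<open>T\<close> with \<open>\<epsilon> = (i, j)\<close> replaces \<open>w i\<close> by \<open>w i - w j\<close>; the
  weights stay positive and linearly independent over \<open>\<rat>\<close>. Let \<open>E\<close> be the set of arcs used in
  one period. If an arc \<open>(i, j) \<in> E\<close> ended in a vertex without outgoing arc, \<open>w j\<close> would be
  constant and \<open>w i\<close> would lose \<open>w j\<close> in every period. If two vertices \<open>a, b\<close> carried a 2-cycle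
  of \<open>E\<close> and no arc left \<open>{a, b}\<close>, then \<open>w a / w b\<close> would run through a periodic additive
  continued fraction, hence be fixed by an integral Moebius map, hence be rational or a quadratic
  irrationality in the cubic field \<open>K\<close>; both are impossible. These two facts force any two
  vertices to be joined by a path of length at most two in \<open>E\<close>, and since the product of the
  matrices \<open>M\<^sub>\<epsilon>\<close> dominates the identity plus the adjacency matrix of \<open>E\<close>, its square is
  positive.
\<close>

section \<open>Rational linear independence and real cubic fields\<close>

interpretation Q: vector_space "\<lambda>(c::rat) (x::real). of_rat c * x"
  by standard (auto simp: algebra_simps of_rat_add of_rat_mult)

lemma rat_lin_indep_not_rat_multiple:
  assumes "rat_lin_indep w n" "i < n" "j < n" "i \<noteq> j"
  shows "w i \<noteq> of_rat c * w j"
proof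
  assume eq: "w i = of_rat c * w j"
  define d where "d k = (if k = i then 1 else if k = j then - c else 0)" for k
  have "(\<Sum>k<n. of_rat (d k) * w k) = (\<Sum>k<n. (if k = i then w i else 0) + (if k = j then - of_rat c * w j else 0))"
    using assms(4) by (intro sum.cong) (auto simp: d_def of_rat_minus)
  also have "\<dots> = 0"
    using assms(2,3) eq by (simp add: sum.distrib)
  finally have "d i = 0" using assms(1,2) unfolding rat_lin_indep_def by blast
  then show False by (simp add: d_def)
qed

lemma rat_lin_indep_independent:
  assumes "rat_lin_indep b n"
  shows "inj_on b {..<n}" "Q.independent (b ` {..<n})"
proof -
  show inj: "inj_on b {..<n}"
    using rat_lin_indep_not_rat_multiple[OF assms, of _ _ 1] by (auto intro: inj_onI)
  show "Q.independent (b ` {..<n})"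
  proof
    assume "Q.dependent (b ` {..<n})"
    then obtain u where u: "\<exists>v\<in>b ` {..<n}. u v \<noteq> 0" "(\<Sum>v\<in>b ` {..<n}. of_rat (u v) * v) = 0"
      using Q.dependent_finite by auto
    have "(\<Sum>k<n. of_rat (u (b k)) * b k) = 0"
      using u(2) by (simp add: sum.reindex[OF inj])
    then show False using u(1) assms unfolding rat_lin_indep_def by fastforce
  qed
qed

lemma rat_lin_indep_subtract:
  assumes "rat_lin_indep w n" "i < n" "j < n" "i \<noteq> j"
  shows "rat_lin_indep (w(i := w i - w j)) n"
  unfolding rat_lin_indep_def
proof (intro allI impI)
  fix c :: "nat \<Rightarrow> rat" and k
  assume sum0: "(\<Sum>k<n. of_rat (c k) * (w(i := w i - w j)) k) = 0" and k: "k < n"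
  define c' where "c' = c(j := c j - c i)"
  have "(\<Sum>k<n. of_rat (c' k) * w k) = 0"
  proof -
    have "(\<Sum>k<n. of_rat (c' k) * w k) = (\<Sum>k<n. of_rat (c k) * w k - (if k = j then of_rat (c i) * w j else 0))"
      by (intro sum.cong) (auto simp: c'_def of_rat_diff left_diff_distrib)
    also have "\<dots> = (\<Sum>k<n. of_rat (c k) * w k - (if k = i then of_rat (c i) * w j else 0))"
      using assms(2,3) by (simp add: sum_subtractf)
    also have "\<dots> = (\<Sum>k<n. of_rat (c k) * (w(i := w i - w j)) k)"
      by (intro sum.cong) (auto simp: right_diff_distrib)
    finally show ?thesis using sum0 by simp
  qed
  then have "\<forall>k<n. c' k = 0" using assms(1) unfolding rat_lin_indep_def by blast
  then have "c' i = 0" "c' k = 0" using k assms(2) by auto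
  then show "c k = 0" using assms(4) by (cases "k = j") (auto simp: c'_def)
qed

lemma Q_span_1_t_iff: "x \<in> Q.span {1, t} \<longleftrightarrow> (\<exists>a b. x = of_rat a + of_rat b * t)"
proof
  assume "x \<in> Q.span {1, t}"
  then obtain a where "x - of_rat a * 1 \<in> Q.span {t}"
    using Q.span_breakdown_eq[of x 1 "{t}"] by auto
  then obtain b where "x - of_rat a = of_rat b * t"
    using Q.span_singleton[of t] by auto
  then show "\<exists>a b. x = of_rat a + of_rat b * t"
    by (metis diff_add_cancel add.commute)
next
  assume "\<exists>a b. x = of_rat a + of_rat b * t"
  then obtain a b where x: "x = of_rat a + of_rat b * t" by blast
  have "of_rat a * 1 + of_rat b * t \<in> Q.span {1, t}"
    by (intro Q.span_add Q.span_scale Q.span_base) auto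
  then show "x \<in> Q.span {1, t}" by (simp add: x)
qed

lemma Q_independent_1_irrational:
  assumes "t \<notin> \<rat>"
  shows "Q.independent {1, t}"
proof -
  have "Q.independent {1}" by (simp add: Q.independent_insert)
  moreover have "t \<notin> Q.span {1}"
    using assms by (auto simp: Q.span_singleton)
  ultimately have "Q.independent (insert t {1})"
    using Q.span_base[of t "{1}"] by (simp add: Q.independent_insert del: Q.span_base)
  then show ?thesis by (simp add: insert_commute)
qed

context
  fixes t :: real and P R :: rat
  assumes quadratic: "t\<^sup>2 = of_rat P * t + of_rat R"
begin

lemma quadratic_span_mult:
  assumes "x \<in> Q.span {1, t}" "y \<in> Q.span {1, t}"
  shows "x * y \<in> Q.span {1, t}"
proof -
  obtain a b c d where xy: "x = of_rat a + of_rat b * t" "y = of_rat c + of_rat d * t"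
    using assms unfolding Q_span_1_t_iff by blast
  have "x * y = of_rat a * of_rat c + (of_rat a * of_rat d + of_rat b * of_rat c) * t
      + of_rat b * of_rat d * t\<^sup>2"
    unfolding xy power2_eq_square by algebra
  also have "\<dots> = of_rat (a * c + b * d * R) + of_rat (a * d + b * c + b * d * P) * t"
    unfolding quadratic of_rat_add of_rat_mult by algebra
  finally have "x * y = of_rat (a * c + b * d * R) + of_rat (a * d + b * c + b * d * P) * t" .
  then show ?thesis unfolding Q_span_1_t_iff by blast
qed

lemma quadratic_span_inverse:
  assumes "t \<notin> \<rat>" "x \<in> Q.span {1, t}"
  shows "inverse x \<in> Q.span {1, t}"
proof (cases "x = 0")
  case False
  obtain a b where x: "x = of_rat a + of_rat b * t"
    using assms(2) unfolding Q_span_1_t_iff by blast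
  txt \<open>The conjugate of \<open>x\<close> in \<open>\<rat>(t)\<close>; the product \<open>x * y\<close> is the rational norm of \<open>x\<close>.\<close>
  define y where "y = of_rat (a + b * P) + of_rat (- b) * t"
  have y: "y \<in> Q.span {1, t}"
    unfolding y_def Q_span_1_t_iff by blast
  have norm: "x * y = of_rat (a\<^sup>2 + a * b * P - b\<^sup>2 * R)"
    using quadratic unfolding x y_def of_rat_add of_rat_mult of_rat_diff of_rat_power of_rat_minus
    by algebra
  have "y \<noteq> 0"
  proof
    assume "y = 0"
    then have "of_rat b * t = of_rat (a + b * P)"
      unfolding y_def of_rat_minus by simp
    then have "b = 0"
      using assms(1) by (metis Rats_of_rat Rats_divide nonzero_mult_div_cancel_left of_rat_eq_0_iff)
    then show False using \<open>y = 0\<close> False unfolding x y_def by simp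
  qed
  then have "inverse x = inverse (x * y) * y"
    by (simp add: inverse_mult_distrib)
  also have "\<dots> = of_rat (inverse (a\<^sup>2 + a * b * P - b\<^sup>2 * R)) * y"
    by (simp only: norm of_rat_inverse)
  finally have "inverse x = of_rat (inverse (a\<^sup>2 + a * b * P - b\<^sup>2 * R)) * y" .
  then show ?thesis using y by (simp add: Q.span_scale)
qed (simp add: Q.span_zero)

lemma quadratic_extension_independent:
  assumes t: "t \<notin> \<rat>" and u: "u \<notin> Q.span {1, t}"
  shows "Q.independent {t * u, u, 1, t}" "card {t * u, u, 1, t} = 4"
proof -
  have tu: "t * u \<notin> Q.span {u, 1, t}"
  proof
    assume "t * u \<in> Q.span {u, 1, t}"
    then obtain c where "t * u - of_rat c * u \<in> Q.span {1, t}"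
      using Q.span_breakdown_eq[of "t * u" u "{1, t}"] by auto
    then have prod: "(t - of_rat c) * u \<in> Q.span {1, t}"
      by (simp add: left_diff_distrib)
    have tc: "t - of_rat c \<in> Q.span {1, t}"
      unfolding Q_span_1_t_iff by (rule exI[of _ "- c"], rule exI[of _ 1]) (simp add: of_rat_minus)
    have "t - of_rat c \<noteq> 0" using t by auto
    then have "inverse (t - of_rat c) * ((t - of_rat c) * u) = u"
      by (simp only: mult.assoc[symmetric] left_inverse mult_1_left not_False_eq_True)
    moreover have "inverse (t - of_rat c) * ((t - of_rat c) * u) \<in> Q.span {1, t}"
      by (rule quadratic_span_mult[OF quadratic_span_inverse[OF t tc] prod])
    ultimately show False using u by metis
  qed
  have "Q.independent {1, t}" using t by (rule Q_independent_1_irrational)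
  moreover have "u \<notin> {1, t}" "t * u \<notin> {u, 1, t}"
    using u tu Q.span_superset[of "{1, t}"] Q.span_superset[of "{u, 1, t}"] by blast+
  ultimately show "Q.independent {t * u, u, 1, t}"
    using u tu by (simp add: Q.independent_insert)
  have "1 \<noteq> t" using t by auto
  then show "card {t * u, u, 1, t} = 4"
    using \<open>u \<notin> {1, t}\<close> \<open>t * u \<notin> {u, 1, t}\<close> by simp
qed

end

lemma real_cubic_field_basis:
  assumes "real_cubic_field K"
  obtains B where "B \<subseteq> K" "finite B" "card B = 3" "Q.independent B" "K \<subseteq> Q.span B"
proof -
  obtain b where b: "\<forall>i<3. b i \<in> K" "rat_lin_indep b 3" "K = rat_span b 3"
    using assms unfolding real_cubic_field_def by blast
  have "K \<subseteq> Q.span (b ` {..<3})"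
  proof
    fix x assume "x \<in> K"
    then obtain c where "x = (\<Sum>i<3. of_rat (c i) * b i)"
      using b(3) unfolding rat_span_def by blast
    moreover have "of_rat (c i) * b i \<in> Q.span (b ` {..<3})" if "i < 3" for i
      using that by (intro Q.span_scale Q.span_base) auto
    ultimately show "x \<in> Q.span (b ` {..<3})" by (auto intro: Q.span_sum)
  qed
  moreover have "card (b ` {..<3}) = 3"
    using card_image[OF rat_lin_indep_independent(1)[OF b(2)]] by simp
  ultimately show thesis
    using that[of "b ` {..<3}"] b(1) rat_lin_indep_independent(2)[OF b(2)] by auto
qed

lemma real_cubic_field_quadratic_rational:
  assumes K: "real_cubic_field K" and "t \<in> K" and quadratic: "t\<^sup>2 = of_rat P * t + of_rat R"
  shows "t \<in> \<rat>"
proof (rule ccontr)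
  assume t: "t \<notin> \<rat>"
  obtain B where B: "B \<subseteq> K" "finite B" "card B = 3" "Q.independent B" "K \<subseteq> Q.span B"
    using real_cubic_field_basis[OF K] by blast
  have "\<not> B \<subseteq> Q.span {1, t}"
  proof
    assume "B \<subseteq> Q.span {1, t}"
    then have "card B \<le> card {1, t}" using Q.independent_span_bound[of "{1, t}" B] B(4) by auto
    moreover have "card {1, t} \<le> 2" by (simp add: card_insert_if)
    ultimately show False using B(3) by simp
  qed
  then obtain u where u: "u \<in> K" "u \<notin> Q.span {1, t}" using B(1) by blast
  have "1 \<in> K" "t * u \<in> K" using K \<open>t \<in> K\<close> u(1) unfolding real_cubic_field_def subfield_real_def by auto
  then have "{t * u, u, 1, t} \<subseteq> Q.span B" using B(5) u(1) \<open>t \<in> K\<close> by auto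
  then have "card {t * u, u, 1, t} \<le> card B"
    using Q.independent_span_bound[of B] quadratic_extension_independent(1)[OF quadratic t u(2)] B(2)
    by auto
  then show False using quadratic_extension_independent(2)[OF quadratic t u(2)] B(3) by simp
qed

section \<open>The weight dynamics\<close>

definition arcs3 :: "(nat \<times> nat) set" where
  "arcs3 = {(i, j). i < 3 \<and> j < 3 \<and> i \<noteq> j}"

lemma arcs3_eq: "arcs3 = {(0, 1), (0, 2), (1, 0), (1, 2), (2, 0), (2, 1)}"
  unfolding arcs3_def by (auto simp: less_Suc_eq numeral_3_eq_3)

text \<open>A point \<open>(\<alpha>, \<beta>)\<close> of the simplex is \<open>bary w\<close> for \<open>w = (1 - \<alpha> - \<beta>, \<alpha>, \<beta>)\<close>, and \<open>T\<^bsub>(i,j)\<^esub>\<close>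
  acts on \<open>w\<close> as \<open>subtract_arc w (i, j)\<close> (lemma \<open>T_ind_bary\<close>).\<close>

definition bary :: "(nat \<Rightarrow> real) \<Rightarrow> real \<times> real" where
  "bary w = (w 1 / (w 0 + w 1 + w 2), w 2 / (w 0 + w 1 + w 2))"

definition subtract_arc :: "(nat \<Rightarrow> real) \<Rightarrow> nat \<times> nat \<Rightarrow> nat \<Rightarrow> real" where
  "subtract_arc w e = w(fst e := w (fst e) - w (snd e))"

primrec weights :: "(nat \<Rightarrow> nat \<times> nat) \<Rightarrow> (nat \<Rightarrow> real) \<Rightarrow> nat \<Rightarrow> nat \<Rightarrow> real" where
  "weights e w 0 = w"
| "weights e w (Suc n) = subtract_arc (weights e w n) (e n)"

lemma weights_add: "weights e w (m + n) = weights (\<lambda>k. e (m + k)) (weights e w m) n"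
  by (induction n) simp_all

lemma simplex_coordinate_identities:
  fixes a b c :: real
  assumes "0 < a + b + c"
  defines "S \<equiv> a + b + c"
  shows "1 - c / S = (a + b) / S" "1 - b / S = (a + c) / S"
    "b / S - c / S = (b - c) / S" "c / S - b / S = (c - b) / S" "b / S + c / S = (b + c) / S"
    "2 * b / S + c / S - 1 = (b - a) / S" "b / S + 2 * c / S - 1 = (c - a) / S"
    "x / S / (y / S) = x / y"
proof -
  have S: "S \<noteq> 0" using assms by (simp add: S_def)
  show "1 - c / S = (a + b) / S" "1 - b / S = (a + c) / S"
    "b / S - c / S = (b - c) / S" "c / S - b / S = (c - b) / S" "b / S + c / S = (b + c) / S"
    "2 * b / S + c / S - 1 = (b - a) / S" "b / S + 2 * c / S - 1 = (c - a) / S"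
    using S by (simp_all add: field_simps; simp add: S_def)+
  show "x / S / (y / S) = x / y" using S by simp
qed

lemma eps_bary:
  assumes "\<forall>k<3. 0 < w k"
  shows "eps K p q (bary w) \<in> arcs3" "w (snd (eps K p q (bary w))) \<le> w (fst (eps K p q (bary w)))"
proof -
  have "0 < w 0" "0 < w 1" "0 < w 2" using assms by auto
  then have S: "0 < w 0 + w 1 + w 2" by simp
  show "eps K p q (bary w) \<in> arcs3" "w (snd (eps K p q (bary w))) \<le> w (fst (eps K p q (bary w)))"
    using S simplex_coordinate_identities[OF S]
    unfolding eps_def bary_def Let_def arcs3_eq by (auto simp: divide_le_0_iff divide_le_cancel)
qed

lemma T_ind_on_simplex:
  fixes a b c :: real
  assumes "0 < a" "0 < b" "0 < c"
  defines "S \<equiv> a + b + c"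
  shows "T_ind (1, 2) (b / S, c / S) = ((b - c) / (a + b), c / (a + b))"
    "T_ind (2, 1) (b / S, c / S) = (b / (a + c), (c - b) / (a + c))"
    "T_ind (0, 1) (b / S, c / S) = (b / (a + c), c / (a + c))"
    "T_ind (1, 0) (b / S, c / S) = ((b - a) / (b + c), c / (b + c))"
    "T_ind (0, 2) (b / S, c / S) = (b / (a + b), c / (a + b))"
    "T_ind (2, 0) (b / S, c / S) = (b / (b + c), (c - a) / (b + c))"
  using assms simplex_coordinate_identities[of a b c] unfolding T_ind_def S_def by simp_all

lemma T_ind_bary:
  assumes "e \<in> arcs3" "\<forall>k<3. 0 < w k"
  shows "T_ind e (bary w) = bary (subtract_arc w e)"
proof -
  have "0 < w 0" "0 < w 1" "0 < w 2" using assms(2) by auto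
  note T = T_ind_on_simplex[OF this]
  from assms(1) show ?thesis
    unfolding arcs3_eq
    by (elim insertE emptyE; hypsubst; unfold bary_def T; simp add: subtract_arc_def)
qed

lemma subtract_arc_positive_indep:
  assumes pos: "\<forall>k<3. 0 < w k" and indep: "rat_lin_indep w 3"
    and e: "e \<in> arcs3" and le: "w (snd e) \<le> w (fst e)"
  shows "\<forall>k<3. 0 < subtract_arc w e k" "rat_lin_indep (subtract_arc w e) 3"
proof -
  have e': "fst e < 3" "snd e < 3" "fst e \<noteq> snd e" using e unfolding arcs3_def by auto
  have "w (fst e) \<noteq> of_rat 1 * w (snd e)"
    using rat_lin_indep_not_rat_multiple[OF indep e'] .
  then show "\<forall>k<3. 0 < subtract_arc w e k"
    using pos le by (simp add: subtract_arc_def)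
  show "rat_lin_indep (subtract_arc w e) 3"
    unfolding subtract_arc_def using rat_lin_indep_subtract[OF indep e'] .
qed

lemma Tmap_orbit_weights:
  fixes K :: "real set" and p q :: nat and w :: "nat \<Rightarrow> real"
  assumes pos: "\<forall>k<3. 0 < w k" and indep: "rat_lin_indep w 3"
  defines "e \<equiv> \<lambda>n. eps K p q ((Tmap K p q ^^ n) (bary w))"
  shows "(Tmap K p q ^^ n) (bary w) = bary (weights e w n) \<and> e n \<in> arcs3
    \<and> (\<forall>k<3. 0 < weights e w n k) \<and> rat_lin_indep (weights e w n) 3"
proof (induction n)
  case 0
  show ?case using pos indep eps_bary(1)[OF pos] by (simp add: e_def)
next
  case (Suc n)
  define v where "v = weights e w n"
  have IH: "(Tmap K p q ^^ n) (bary w) = bary v" "e n \<in> arcs3" "\<forall>k<3. 0 < v k" "rat_lin_indep v 3"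
    using Suc.IH unfolding v_def by auto
  have en: "e n = eps K p q (bary v)" using IH(1) by (simp add: e_def)
  have le: "v (snd (e n)) \<le> v (fst (e n))" unfolding en using IH(3) by (rule eps_bary(2))
  note step = subtract_arc_positive_indep[OF IH(3,4,2) le]
  have orbit: "(Tmap K p q ^^ Suc n) (bary w) = bary (weights e w (Suc n))"
    using IH(1,2,3) en by (simp add: Tmap_def T_ind_bary v_def)
  moreover have "\<forall>k<3. 0 < weights e w (Suc n) k"
    using step(1) by (simp add: v_def)
  ultimately have "e (Suc n) \<in> arcs3" unfolding e_def by (simp add: eps_bary(1))
  then show ?case using orbit step by (simp add: v_def)
qed

section \<open>Two-vertex subsystems\<close>

datatype mat2 = Mat2 (m11: nat) (m12: nat) (m21: nat) (m22: nat)

fun mat2_mult :: "mat2 \<Rightarrow> mat2 \<Rightarrow> mat2" where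
  "mat2_mult (Mat2 a b c d) (Mat2 a' b' c' d') =
     Mat2 (a * a' + b * c') (a * b' + b * d') (c * a' + d * c') (c * b' + d * d')"

definition pair_step :: "nat \<Rightarrow> nat \<Rightarrow> nat \<times> nat \<Rightarrow> mat2" where
  "pair_step a b x =
     (if x = (a, b) then Mat2 1 1 0 1 else if x = (b, a) then Mat2 1 0 1 1 else Mat2 1 0 0 1)"

text \<open>\<open>pair_matrix a b e n\<close> expresses \<open>(w a, w b)\<close> through the weights at time \<open>n\<close>, as long as
  only the arcs \<open>(a, b)\<close> and \<open>(b, a)\<close> leave \<open>{a, b}\<close> (lemma \<open>weights_pair_matrix\<close>).\<close>

primrec pair_matrix :: "nat \<Rightarrow> nat \<Rightarrow> (nat \<Rightarrow> nat \<times> nat) \<Rightarrow> nat \<Rightarrow> mat2" where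
  "pair_matrix a b e 0 = Mat2 1 0 0 1"
| "pair_matrix a b e (Suc n) = mat2_mult (pair_matrix a b e n) (pair_step a b (e n))"

lemma pair_step_cases:
  obtains "pair_step a b x = Mat2 1 1 0 1" "x = (a, b)"
  | "pair_step a b x = Mat2 1 0 1 1" "x = (b, a)" "x \<noteq> (a, b)"
  | "pair_step a b x = Mat2 1 0 0 1" "x \<noteq> (a, b)" "x \<noteq> (b, a)"
proof -
  consider "x = (a, b)" | "x \<noteq> (a, b)" "x = (b, a)" | "x \<noteq> (a, b)" "x \<noteq> (b, a)" by blast
  then show thesis
  proof cases
    case 1
    then show thesis by (intro that(1)) (simp_all add: pair_step_def)
  next
    case 2
    then show thesis by (intro that(2)) (simp_all add: pair_step_def)
  next
    case 3
    then show thesis by (intro that(3)) (simp_all add: pair_step_def)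
  qed
qed

lemma pair_matrix_det:
  "m11 (pair_matrix a b e n) * m22 (pair_matrix a b e n)
     = m12 (pair_matrix a b e n) * m21 (pair_matrix a b e n) + 1"
proof (induction n)
  case (Suc n)
  obtain x y u v where B: "pair_matrix a b e n = Mat2 x y u v" by (cases "pair_matrix a b e n")
  have det: "x * v = y * u + 1" using Suc B by simp
  show ?case
  proof (cases rule: pair_step_cases[of a b "e n"])
    case 1
    have "x * (u + v) = (x + y) * u + 1" using det by (simp add: algebra_simps)
    then show ?thesis using B 1 by simp
  next
    case 2
    have "(x + y) * v = y * (u + v) + 1" using det by (simp add: algebra_simps)
    then show ?thesis using B 2 by simp
  next
    case 3
    then show ?thesis using B det by simp
  qed
qed simp

lemma pair_matrix_m22_pos: "0 < m22 (pair_matrix a b e n)"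
  using pair_matrix_det[of a b e n] by (auto intro: gr0I)

lemma pair_matrix_m21_Suc:
  "m21 (pair_matrix a b e n) + (if e n = (b, a) \<and> a \<noteq> b then 1 else 0)
     \<le> m21 (pair_matrix a b e (Suc n))"
proof -
  obtain x y u v where B: "pair_matrix a b e n = Mat2 x y u v" by (cases "pair_matrix a b e n")
  then have "0 < v" using pair_matrix_m22_pos[of a b e n] by simp
  with B show ?thesis by (cases rule: pair_step_cases[of a b "e n"]) auto
qed

lemma pair_matrix_m21_mono: "m \<le> n \<Longrightarrow> m21 (pair_matrix a b e m) \<le> m21 (pair_matrix a b e n)"
proof (induction n rule: dec_induct)
  case (step n)
  then show ?case using pair_matrix_m21_Suc[of a b e n] by linarith
qed simp

lemma weights_pair_matrix:
  assumes "a \<noteq> b" and closed: "\<And>n. fst (e n) \<in> {a, b} \<Longrightarrow> e n \<in> {(a, b), (b, a)}"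
  shows "w a = m11 (pair_matrix a b e n) * weights e w n a + m12 (pair_matrix a b e n) * weights e w n b
     \<and> w b = m21 (pair_matrix a b e n) * weights e w n a + m22 (pair_matrix a b e n) * weights e w n b"
proof (induction n)
  case (Suc n)
  obtain x y u v where B: "pair_matrix a b e n = Mat2 x y u v" by (cases "pair_matrix a b e n")
  define A C where "A = weights e w n a" and "C = weights e w n b"
  have IH: "w a = x * A + y * C" "w b = u * A + v * C" using Suc B by (simp_all add: A_def C_def)
  show ?case
  proof (cases rule: pair_step_cases[of a b "e n"])
    case 1
    then have M: "pair_matrix a b e (Suc n) = Mat2 x (x + y) u (u + v)" using B by simp
    have W: "weights e w (Suc n) a = A - C" "weights e w (Suc n) b = C"
      using 1 assms(1) by (simp_all add: subtract_arc_def A_def C_def)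
    show ?thesis unfolding M W mat2.sel using IH by (simp add: algebra_simps)
  next
    case 2
    then have M: "pair_matrix a b e (Suc n) = Mat2 (x + y) y (u + v) v" using B by simp
    have W: "weights e w (Suc n) a = A" "weights e w (Suc n) b = C - A"
      using 2 assms(1) by (simp_all add: subtract_arc_def A_def C_def)
    show ?thesis unfolding M W mat2.sel using IH by (simp add: algebra_simps)
  next
    case 3
    then have M: "pair_matrix a b e (Suc n) = Mat2 x y u v" using B by simp
    have "fst (e n) \<notin> {a, b}" using 3 closed by blast
    then have W: "weights e w (Suc n) a = A" "weights e w (Suc n) b = C"
      by (auto simp: subtract_arc_def A_def C_def)
    show ?thesis unfolding M W mat2.sel using IH by simp
  qed
qed simp

lemma mobius_image_diameter:
  fixes p q r z U V U' V' :: real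
  assumes pos: "0 < r" "0 < z" "0 < U" "0 < V" "0 < U'" "0 < V'"
    and det: "p * z = q * r + 1"
  shows "\<bar>(p * U + q * V) / (r * U + z * V) - (p * U' + q * V') / (r * U' + z * V')\<bar> \<le> 2 / (r * z)"
proof -
  define X Y where "X = r * U + z * V" and "Y = r * U' + z * V'"
  have XY: "0 < X" "0 < Y" using pos by (simp_all add: X_def Y_def add_pos_pos)
  have "(p * U + q * V) * Y - (p * U' + q * V') * X = (p * z - q * r) * (U * V' - U' * V)"
    unfolding X_def Y_def by (simp add: algebra_simps)
  then have diff: "(p * U + q * V) / X - (p * U' + q * V') / Y = (U * V' - U' * V) / (X * Y)"
    using XY det by (simp add: diff_frac_eq)
  have "0 < U * V'" "0 < U' * V" using pos by simp_all
  then have "\<bar>U * V' - U' * V\<bar> \<le> U * V' + U' * V" by (auto simp: abs_le_iff)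
  then have "r * z * \<bar>U * V' - U' * V\<bar> \<le> r * z * (U * V' + U' * V)"
    using pos by (intro mult_left_mono) auto
  also have "\<dots> = r * U * (z * V') + z * V * (r * U')"
    by (simp add: algebra_simps)
  also have "\<dots> \<le> X * Y + X * Y"
    using pos XY by (intro add_mono mult_mono) (simp_all add: X_def Y_def)
  finally have "r * z * \<bar>U * V' - U' * V\<bar> \<le> 2 * (X * Y)" by simp
  then have "\<bar>U * V' - U' * V\<bar> / (X * Y) \<le> 2 / (r * z)"
    using pos XY by (simp add: divide_le_eq le_divide_eq mult.commute)
  then show ?thesis
    using XY by (simp add: X_def[symmetric] Y_def[symmetric] diff abs_divide)
qed

section \<open>Periodic orbits\<close>

lemma arcs3_two_step_reachable:
  fixes E :: "(nat \<times> nat) set"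
  assumes sub: "E \<subseteq> arcs3" and ne: "E \<noteq> {}"
    and succ: "\<And>i j. (i, j) \<in> E \<Longrightarrow> \<exists>k. (j, k) \<in> E"
    and leave: "\<And>a b. (a, b) \<in> E \<Longrightarrow> (b, a) \<in> E \<Longrightarrow> \<exists>(x, y) \<in> E. x \<in> {a, b} \<and> y \<notin> {a, b}"
    and ij: "(i, j) \<in> arcs3"
  shows "(i, j) \<in> E \<or> (\<exists>m. (i, m) \<in> E \<and> (m, j) \<in> E)"
proof -
  have dom: "(x, y) \<in> {(0, 1), (0, 2), (1, 0), (1, 2), (2, 0), (2, 1)}" if "(x, y) \<in> E" for x y
    using sub that unfolding arcs3_eq by blast
  have out: "\<exists>k\<in>{0, 1, 2} - {j}. (j, k) \<in> E" if "(i, j) \<in> E" for i j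
    using succ[OF that] dom by fastforce
  have leave': "\<exists>x\<in>{a, b}. \<exists>y\<in>{0, 1, 2} - {a, b}. (x, y) \<in> E" if "(a, b) \<in> E" "(b, a) \<in> E" for a b
    using leave[OF that] dom by fastforce
  have "(0, 1) \<in> E \<or> (0, 2) \<in> E \<or> (1, 0) \<in> E \<or> (1, 2) \<in> E \<or> (2, 0) \<in> E \<or> (2, 1) \<in> E"
    using ne dom by fast
  moreover have "(1, 0) \<in> E \<or> (1, 2) \<in> E" if "(0, 1) \<in> E \<or> (2, 1) \<in> E"
    using that out[of 0 1] out[of 2 1] by auto
  moreover have "(2, 0) \<in> E \<or> (2, 1) \<in> E" if "(0, 2) \<in> E \<or> (1, 2) \<in> E"
    using that out[of 0 2] out[of 1 2] by auto
  moreover have "(0, 1) \<in> E \<or> (0, 2) \<in> E" if "(1, 0) \<in> E \<or> (2, 0) \<in> E"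
    using that out[of 1 0] out[of 2 0] by auto
  moreover have "(0, 2) \<in> E \<or> (1, 2) \<in> E" if "(0, 1) \<in> E" "(1, 0) \<in> E"
    using leave'[OF that] by auto
  moreover have "(0, 1) \<in> E \<or> (2, 1) \<in> E" if "(0, 2) \<in> E" "(2, 0) \<in> E"
    using leave'[OF that] by auto
  moreover have "(1, 0) \<in> E \<or> (2, 0) \<in> E" if "(1, 2) \<in> E" "(2, 1) \<in> E"
    using leave'[OF that] by auto
  ultimately show ?thesis using ij unfolding arcs3_eq by blast
qed

locale periodic_orbit =
  fixes e :: "nat \<Rightarrow> nat \<times> nat" and w :: "nat \<Rightarrow> real" and l :: nat
  assumes arcs: "e n \<in> arcs3"
    and positive: "k < 3 \<Longrightarrow> 0 < weights e w n k"
    and periodic: "e (n + l) = e n"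
    and period_pos: "0 < l"
begin

lemma periodic_mult: "e (n + k * l) = e n"
proof (induction k)
  case (Suc k)
  have "e (n + Suc k * l) = e ((n + k * l) + l)" by (simp add: algebra_simps)
  also have "\<dots> = e n" using periodic Suc.IH by simp
  finally show ?case .
qed simp

lemma in_period: "e n \<in> e ` {..<l}"
proof -
  have "e n = e (n mod l + n div l * l)" by simp
  also have "\<dots> = e (n mod l)" by (rule periodic_mult)
  finally show ?thesis using period_pos by simp
qed

lemma weights_antimono: "m \<le> n \<Longrightarrow> weights e w n k \<le> weights e w m k"
proof (induction n rule: dec_induct)
  case (step n)
  have "weights e w (Suc n) k \<le> weights e w n k"
    using positive[of "snd (e n)" n] arcs[of n] by (auto simp: subtract_arc_def arcs3_def)
  with step show ?case by linarith
qed simp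

lemma arc_head_has_out_arc:
  assumes "(i, j) \<in> e ` {..<l}"
  shows "\<exists>k. (j, k) \<in> e ` {..<l}"
proof (rule ccontr)
  assume no_out: "\<nexists>k. (j, k) \<in> e ` {..<l}"
  have "j \<noteq> fst (e n)" for n using in_period[of n] no_out by (metis prod.collapse)
  then have const: "weights e w n j = w j" for n
    by (induction n) (simp_all add: subtract_arc_def)
  obtain n0 where n0: "e n0 = (i, j)" using assms by auto
  have ij: "i < 3" "j < 3" "i \<noteq> j" using arcs[of n0] n0 by (auto simp: arcs3_def)
  have decay: "weights e w (n0 + k * l) i \<le> w i - real k * w j" for k
  proof (induction k)
    case 0
    then show ?case using weights_antimono[of 0 n0 i] by simp
  next
    case (Suc k)
    have "e (n0 + k * l) = (i, j)" using periodic_mult n0 by simp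
    then have "weights e w (Suc (n0 + k * l)) i = weights e w (n0 + k * l) i - w j"
      using ij const by (simp add: subtract_arc_def)
    moreover have "weights e w (n0 + Suc k * l) i \<le> weights e w (Suc (n0 + k * l)) i"
      using period_pos by (intro weights_antimono) simp
    ultimately show ?case using Suc by (simp add: algebra_simps)
  qed
  obtain k where "w i < real k * w j"
    using reals_Archimedean3 positive[of j 0] ij by auto
  then show False using decay[of k] positive[of i "n0 + k * l"] ij by simp
qed

lemma weights_period_shift: "weights e (weights e w l) n = weights e w (l + n)"
proof -
  have "(\<lambda>k. e (l + k)) = e" using periodic by (simp add: add.commute)
  then show ?thesis using weights_add[of e w l n] by simp
qed

lemma pair_matrix_m21_unbounded:
  assumes "(b, a) \<in> e ` {..<l}" "a \<noteq> b"
  shows "k \<le> m21 (pair_matrix a b e (k * l))"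
proof (induction k)
  case (Suc k)
  obtain n1 where n1: "n1 < l" "e n1 = (b, a)" using assms(1) by auto
  have "e (k * l + n1) = (b, a)" using periodic_mult[of n1 k] n1 by (simp add: add.commute)
  then have "m21 (pair_matrix a b e (k * l + n1)) < m21 (pair_matrix a b e (Suc (k * l + n1)))"
    using pair_matrix_m21_Suc[of a b e "k * l + n1"] assms(2) by simp
  moreover have "m21 (pair_matrix a b e (k * l)) \<le> m21 (pair_matrix a b e (k * l + n1))"
    by (rule pair_matrix_m21_mono) simp
  moreover have "m21 (pair_matrix a b e (Suc (k * l + n1))) \<le> m21 (pair_matrix a b e (Suc k * l))"
    using n1(1) by (intro pair_matrix_m21_mono) simp
  ultimately show ?case using Suc.IH by linarith
qed simp

context
  fixes a b :: nat
  assumes ab: "a < 3" "b < 3" "a \<noteq> b"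
    and closed: "\<And>n. fst (e n) \<in> {a, b} \<Longrightarrow> e n \<in> {(a, b), (b, a)}"
    and ba: "(b, a) \<in> e ` {..<l}"
begin

text \<open>At times \<open>0\<close> and \<open>l\<close> the same matrices act on \<open>(w a, w b)\<close>, so both ratios lie in the image
  of \<open>(0, \<infinity>)\<close> under Moebius maps whose diameters tend to zero.\<close>

lemma closed_pair_ratio_close:
  assumes "0 < m21 (pair_matrix a b e n)"
  shows "\<bar>w a / w b - weights e w l a / weights e w l b\<bar>
    \<le> 2 / (real (m21 (pair_matrix a b e n)) * real (m22 (pair_matrix a b e n)))"
proof -
  obtain x y u v where B: "pair_matrix a b e n = Mat2 x y u v" by (cases "pair_matrix a b e n")
  have det: "real x * real v = real y * real u + 1" "0 < v"
    using pair_matrix_det[of a b e n] pair_matrix_m22_pos[of a b e n] B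
    by (simp_all flip: of_nat_mult of_nat_add)
  have now: "w a = x * weights e w n a + y * weights e w n b" "w b = u * weights e w n a + v * weights e w n b"
    using weights_pair_matrix[of a b e w n, OF ab(3) closed] B by simp_all
  have later: "weights e w l a = x * weights e w (l + n) a + y * weights e w (l + n) b"
    "weights e w l b = u * weights e w (l + n) a + v * weights e w (l + n) b"
    using weights_pair_matrix[of a b e "weights e w l" n, OF ab(3) closed] B by (simp_all add: weights_period_shift)
  show ?thesis
    unfolding now later B mat2.sel
    using assms B det ab positive by (intro mobius_image_diameter) auto
qed

lemma closed_pair_ratio_periodic: "w a / w b = weights e w l a / weights e w l b"
proof (rule ccontr)
  define d where "d = \<bar>w a / w b - weights e w l a / weights e w l b\<bar>"
  assume "w a / w b \<noteq> weights e w l a / weights e w l b"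
  then have d: "0 < d" by (simp add: d_def)
  obtain k :: nat where k: "2 / d < real k" using reals_Archimedean2 by blast
  then have k1: "1 \<le> k" using d by (cases k) (auto simp: field_simps)
  define B where "B = pair_matrix a b e (k * l)"
  have B: "k \<le> m21 B" "1 \<le> m22 B"
    using pair_matrix_m21_unbounded[OF ba ab(3), of k] pair_matrix_m22_pos[of a b e "k * l"]
    by (auto simp: B_def)
  have "d \<le> 2 / (real (m21 B) * real (m22 B))"
    using closed_pair_ratio_close[of "k * l"] B k1 by (simp add: d_def B_def)
  also have "\<dots> \<le> 2 / real k"
  proof -
    have "real k \<le> real (m21 B) * real (m22 B)"
      using B by (metis mult_le_mono of_nat_le_iff of_nat_mult mult_1_right)
    then show ?thesis using k1 by (intro divide_left_mono) auto
  qed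
  also have "\<dots> < d" using k d k1 by (simp add: field_simps)
  finally show False by simp
qed

text \<open>The ratio is a fixed point of the Moebius map of \<open>pair_matrix a b e l\<close>.\<close>

lemma closed_pair_ratio_quadratic:
  obtains P R where "(w a / w b)\<^sup>2 = of_rat P * (w a / w b) + of_rat R"
proof -
  obtain x y u v where B: "pair_matrix a b e l = Mat2 x y u v" by (cases "pair_matrix a b e l")
  have u: "1 \<le> u" using pair_matrix_m21_unbounded[OF ba ab(3), of 1] B by simp
  define t U V where "t = w a / w b" and "U = weights e w l a" and "V = weights e w l b"
  have V: "0 < V" "0 < w b" using positive[of b l] positive[of b 0] ab by (simp_all add: V_def)
  have "w a = x * U + y * V" "w b = u * U + v * V"
    using weights_pair_matrix[of a b e w l, OF ab(3) closed] B by (simp_all add: U_def V_def)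
  moreover have "U = t * V" "w a = t * w b"
    using closed_pair_ratio_periodic V by (simp_all add: t_def U_def V_def field_simps)
  ultimately have "(t * (u * t + v)) * V = (x * t + y) * V"
    by (simp add: algebra_simps)
  then have "t * (u * t + v) = x * t + y" using V by simp
  then have "t\<^sup>2 = of_rat ((of_nat x - of_nat v) / of_nat u) * t + of_rat (of_nat y / of_nat u)"
    using u by (simp add: of_rat_divide of_rat_diff field_simps power2_eq_square)
  then show thesis using that t_def by blast
qed

end

lemma two_cycle_leaves_pair:
  assumes K: "real_cubic_field K" and wK: "\<forall>k<3. w k \<in> K" and indep: "rat_lin_indep w 3"
    and ba: "(b, a) \<in> e ` {..<l}"
  shows "\<exists>(x, y) \<in> e ` {..<l}. x \<in> {a, b} \<and> y \<notin> {a, b}"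
proof (rule ccontr)
  assume "\<not> ?thesis"
  then have closed_period: "\<And>x y. (x, y) \<in> e ` {..<l} \<Longrightarrow> x \<in> {a, b} \<Longrightarrow> y \<in> {a, b}" by blast
  obtain n where "e n = (b, a)" using ba by auto
  then have ab: "a < 3" "b < 3" "a \<noteq> b" using arcs[of n] by (auto simp: arcs3_def)
  have closed: "e n \<in> {(a, b), (b, a)}" if "fst (e n) \<in> {a, b}" for n
    using closed_period[of "fst (e n)" "snd (e n)"] in_period[of n] arcs[of n] that
    by (auto simp: arcs3_def)
  obtain P R where quadratic: "(w a / w b)\<^sup>2 = of_rat P * (w a / w b) + of_rat R"
    using closed_pair_ratio_quadratic[of a b, OF ab closed ba] by blast
  have "w a / w b \<in> K"
    using K wK ab unfolding real_cubic_field_def subfield_real_def by (simp add: divide_inverse)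
  then have "w a / w b \<in> \<rat>" by (rule real_cubic_field_quadratic_rational[OF K _ quadratic])
  then obtain c where "w a / w b = of_rat c" by (auto elim: Rats_cases)
  moreover have "0 < w b" using positive[of b 0] ab by simp
  ultimately have "w a = of_rat c * w b" by (simp add: field_simps)
  then show False using rat_lin_indep_not_rat_multiple[OF indep ab] by blast
qed

lemma period_arcs_two_step_reachable:
  assumes "real_cubic_field K" "\<forall>k<3. w k \<in> K" "rat_lin_indep w 3" "(i, j) \<in> arcs3"
  shows "(i, j) \<in> e ` {..<l} \<or> (\<exists>m. (i, m) \<in> e ` {..<l} \<and> (m, j) \<in> e ` {..<l})"
proof (rule arcs3_two_step_reachable)
  show "e ` {..<l} \<subseteq> arcs3" using arcs by blast
  show "e ` {..<l} \<noteq> {}" using period_pos by blast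
  show "\<exists>k. (j', k) \<in> e ` {..<l}" if "(i', j') \<in> e ` {..<l}" for i' j'
    using that by (rule arc_head_has_out_arc)
  show "\<exists>(x, y) \<in> e ` {..<l}. x \<in> {a, b} \<and> y \<notin> {a, b}"
    if "(a, b) \<in> e ` {..<l}" "(b, a) \<in> e ` {..<l}" for a b
    using that(2) by (rule two_cycle_leaves_pair[OF assms(1-3)])
qed (rule assms(4))

end

section \<open>Primitivity\<close>

lemma mat_mult3_ge_term: "k < 3 \<Longrightarrow> A i k * B k j \<le> mat_mult3 A B i j"
  unfolding mat_mult3_def by (rule member_le_sum) auto

lemma mat_prod_list3_M_ind_ge_1:
  assumes "i < 3" "j < 3" "i = j \<or> (i, j) \<in> set es"
  shows "1 \<le> mat_prod_list3 (map M_ind es) i j"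
  using assms
proof (induction es arbitrary: i j)
  case Nil
  then show ?case by (simp add: mat_prod_list3_def mat_id3_def)
next
  case (Cons x es)
  define P where "P = mat_prod_list3 (map M_ind es)"
  have prod: "mat_prod_list3 (map M_ind (x # es)) = mat_mult3 (M_ind x) P"
    by (simp add: P_def mat_prod_list3_def)
  consider "i = j" | "(i, j) = x" | "(i, j) \<in> set es" using Cons.prems by auto
  then show ?case
  proof cases
    case 1
    then have "1 \<le> P j j" using Cons by (simp add: P_def)
    moreover have "M_ind x i j * P j j \<le> mat_mult3 (M_ind x) P i j"
      using Cons.prems mat_mult3_ge_term by blast
    ultimately show ?thesis unfolding prod using 1 by (simp add: M_ind_def)
  next
    case 2
    then have "1 \<le> P j j" using Cons by (simp add: P_def)
    moreover have "M_ind x i j * P j j \<le> mat_mult3 (M_ind x) P i j"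
      using Cons.prems mat_mult3_ge_term by blast
    ultimately show ?thesis unfolding prod using 2 by (simp add: M_ind_def)
  next
    case 3
    then have "1 \<le> P i j" using Cons by (simp add: P_def)
    moreover have "M_ind x i i * P i j \<le> mat_mult3 (M_ind x) P i j"
      using Cons.prems mat_mult3_ge_term by blast
    ultimately show ?thesis unfolding prod by (simp add: M_ind_def)
  qed
qed

text \<open>The product dominates the identity plus the adjacency matrix of the arcs used.\<close>

lemma primitive3_M_ind_prod:
  assumes sub: "set es \<subseteq> arcs3"
    and reach: "\<And>i j. (i, j) \<in> arcs3 \<Longrightarrow> (i, j) \<in> set es \<or> (\<exists>m. (i, m) \<in> set es \<and> (m, j) \<in> set es)"
  shows "primitive3 (mat_prod_list3 (map M_ind es))"
  unfolding primitive3_def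
proof (intro exI[of _ 2] conjI allI impI)
  fix i j :: nat
  assume ij: "i < 3" "j < 3"
  define P where "P = mat_prod_list3 (map M_ind es)"
  have sq: "mat_pow3 P 2 i j = mat_mult3 P (mat_mult3 P mat_id3) i j"
    by (simp add: mat_pow3_def mat_prod_list3_def numeral_2_eq_2)
  have id: "mat_mult3 P mat_id3 m j = P m j" for m
  proof -
    have "mat_mult3 P mat_id3 m j = (\<Sum>k<3. if k = j then P m k else 0)"
      unfolding mat_mult3_def mat_id3_def by (rule sum.cong) simp_all
    then show ?thesis using ij(2) by simp
  qed
  have ge1: "1 \<le> P i' j'" if "i' < 3" "j' < 3" "i' = j' \<or> (i', j') \<in> set es" for i' j'
    unfolding P_def using that by (rule mat_prod_list3_M_ind_ge_1)
  obtain m where m: "m < 3" "1 \<le> P i m" "1 \<le> P m j"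
  proof (cases "(i, j) \<in> arcs3")
    case True
    then consider "(i, j) \<in> set es" | m where "(i, m) \<in> set es" "(m, j) \<in> set es"
      using reach by blast
    then show thesis
    proof cases
      case 1
      then show thesis using that[of j] ij ge1 by simp
    next
      case (2 m)
      then have "m < 3" using sub by (auto simp: arcs3_def)
      then show thesis using that[of m] 2 ij ge1 by simp
    qed
  next
    case False
    then have "i = j" using ij by (simp add: arcs3_def)
    then show thesis using that[of j] ij ge1 by simp
  qed
  have "P i m * P m j \<le> mat_pow3 P 2 i j"
    using mat_mult3_ge_term[OF m(1), of P i "mat_mult3 P mat_id3" j] by (simp add: sq id)
  moreover have "1 \<le> P i m * P m j" using mult_le_mono[OF m(2,3)] by simp
  ultimately have "0 < mat_pow3 P 2 i j" by linarith
  then show "0 < mat_pow3 (mat_prod_list3 (map M_ind es)) 2 i j" by (simp add: P_def)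
qed simp

lemma Delta_K_weights:
  assumes "(\<alpha>, \<beta>) \<in> Delta_K K" and K: "real_cubic_field K"
  defines "w \<equiv> \<lambda>k. [1 - \<alpha> - \<beta>, \<alpha>, \<beta>] ! k"
  shows "bary w = (\<alpha>, \<beta>)" "\<forall>k<3. 0 < w k" "\<forall>k<3. w k \<in> K" "rat_lin_indep w 3"
proof -
  have \<alpha>\<beta>: "\<alpha> \<in> K" "\<beta> \<in> K" "0 < \<alpha>" "0 < \<beta>" "\<alpha> + \<beta> < 1"
    and indep: "rat_lin_indep (\<lambda>i. [1, \<alpha>, \<beta>] ! i) 3"
    using assms(1) unfolding Delta_K_def by auto
  have all3: "(\<forall>k<3. P k) \<longleftrightarrow> P 0 \<and> P 1 \<and> P 2" for P :: "nat \<Rightarrow> bool"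
    by (auto simp: less_Suc_eq eval_nat_numeral)
  show "bary w = (\<alpha>, \<beta>)" by (simp add: bary_def w_def)
  show "\<forall>k<3. 0 < w k" using \<alpha>\<beta> by (simp add: all3 w_def)
  have "1 + - \<alpha> + - \<beta> \<in> K"
    using K \<alpha>\<beta>(1,2) unfolding real_cubic_field_def subfield_real_def by blast
  then show "\<forall>k<3. w k \<in> K" using \<alpha>\<beta> by (simp add: all3 w_def)
  show "rat_lin_indep w 3"
    unfolding rat_lin_indep_def
  proof (intro allI impI)
    fix c :: "nat \<Rightarrow> rat" and k :: nat
    assume "(\<Sum>k<3. of_rat (c k) * w k) = 0" and k: "k < 3"
    then have "(\<Sum>k<3. of_rat ([c 0, c 1 - c 0, c 2 - c 0] ! k) * [1, \<alpha>, \<beta>] ! k) = 0"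
      by (simp add: w_def eval_nat_numeral lessThan_Suc of_rat_diff algebra_simps)
    then have "\<forall>k<3. [c 0, c 1 - c 0, c 2 - c 0] ! k = 0"
      using indep unfolding rat_lin_indep_def by blast
    then have "\<forall>k<3. c k = 0" by (simp add: all3)
    then show "c k = 0" using k by blast
  qed
qed

theorem theorem3p7:
  fixes K :: "real set" and p q l :: nat and \<alpha> \<beta> :: real
  assumes "real_cubic_field K"
    and "p > 0" and "q > 0" and "coprime p q" and "\<not> 3 dvd p"
    and "(\<alpha>, \<beta>) \<in> Delta_K K"
    and "l > 0"
    and "\<forall>n. eps K p q ((Tmap K p q ^^ (n + l)) (\<alpha>, \<beta>)) = eps K p q ((Tmap K p q ^^ n) (\<alpha>, \<beta>))"
    and "\<forall>l'. 0 < l' \<and> l' < l \<longrightarrow>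
           (\<exists>n. eps K p q ((Tmap K p q ^^ (n + l')) (\<alpha>, \<beta>)) \<noteq> eps K p q ((Tmap K p q ^^ n) (\<alpha>, \<beta>)))"
  shows "primitive3 (mat_prod_list3 (map (\<lambda>n. M_ind (eps K p q ((Tmap K p q ^^ n) (\<alpha>, \<beta>)))) [0..<l]))"
proof -
  define w where "w = (\<lambda>k. [1 - \<alpha> - \<beta>, \<alpha>, \<beta>] ! k)"
  define e where "e = (\<lambda>n. eps K p q ((Tmap K p q ^^ n) (\<alpha>, \<beta>)))"
  note w = Delta_K_weights[OF assms(6,1), folded w_def]
  have orbit: "e n \<in> arcs3 \<and> (\<forall>k<3. 0 < weights e w n k)" for n
    using Tmap_orbit_weights[OF w(2,4), where K = K and p = p and q = q and n = n]
    unfolding w(1) e_def by blast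
  interpret periodic_orbit e w l
    using orbit assms(7,8) by unfold_locales (simp_all add: e_def)
  have "primitive3 (mat_prod_list3 (map M_ind (map e [0..<l])))"
    using period_arcs_two_step_reachable[OF assms(1) w(3,4)] arcs
    by (intro primitive3_M_ind_prod) (auto simp: atLeast0LessThan)
  then show ?thesis by (simp add: e_def comp_def)
qed

end
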